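(* Let $h$ be a $K$-strongly convex distance-generating function on $\mathcal{X}$ and assume $\nabla h$ is $L_h$-Lipschitz. Then for every $y\in\mathcal{V}^*$, $$\|P_{x_1}(y)-P_{x_2}(y)\|\le\frac{L_h}{K}\|x_1-x_2\|\qquad\text{for all } x_1,x_2\in\operatorname{dom}\partial h.$$
   Context: $\mathcal{X}$ is a compact convex subset of a finite-dimensional normed space $\mathcal{V}$ with norm $\|\cdot\|$ and dual space $\mathcal{V}^*$ with dual norm $\|\cdot\|_*$. $h$ is differentiable on a domain containing $\mathcal{X}$, $K$-strongly convex in the sense $\langle\nabla h(x)-\nabla h(x'),x-x'\rangle\ge K\|x-x'\|^2$ for all $x,x'\in\mathcal{X}$, and $L_h$-Lipschitz gradient means $\|\nabla h(x)-\nabla h(x')\|_*\le L_h\|x-x'\|$. $\operatorname{dom}\partial h$ denotes the set of points of $\mathcal{X}$ where $h$ has nonempty subdifferential. The Bregman divergence is $D(p,x)=h(p)-h(x)-\langle\nabla h(x),p-x\rangle$ and the prox-mapping is $P_x(y)=\arg\min_{x'\in\mathcal{X}}\{\langle y,x-x'\rangle+D(x',x)\}$. *)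

theory Defs
  imports "HOL-Analysis.Analysis"
begin

text \<open>The finite-dimensional space V is modelled by a type 'a of class euclidean_space
(used only for its finite-dimensional real vector structure); the norm of V is an
arbitrary norm N.  The dual space V* is identified with 'a via the pairing
y \<bullet> x (every linear functional on a finite-dimensional space is of this form).\<close>

definition is_norm :: "('a::real_vector \<Rightarrow> real) \<Rightarrow> bool" where
  "is_norm N \<longleftrightarrow>
     (\<forall>x. 0 \<le> N x) \<and> (\<forall>x. N x = 0 \<longleftrightarrow> x = 0) \<and>
     (\<forall>c x. N (c *\<^sub>R x) = \<bar>c\<bar> * N x) \<and> (\<forall>x y. N (x + y) \<le> N x + N y)"

definition dual_norm :: "('a::real_inner \<Rightarrow> real) \<Rightarrow> 'a \<Rightarrow> real" where
  "dual_norm N y = Sup {y \<bullet> x | x. N x \<le> 1}"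

definition bregman :: "('a::real_inner \<Rightarrow> real) \<Rightarrow> ('a \<Rightarrow> 'a) \<Rightarrow> 'a \<Rightarrow> 'a \<Rightarrow> real" where
  "bregman h g p x = h p - h x - g x \<bullet> (p - x)"

definition prox :: "('a::real_inner \<Rightarrow> real) \<Rightarrow> ('a \<Rightarrow> 'a) \<Rightarrow> 'a set \<Rightarrow> 'a \<Rightarrow> 'a \<Rightarrow> 'a" where
  "prox h g X x y = (SOME p. p \<in> X \<and>
      (\<forall>x'\<in>X. y \<bullet> (x - p) + bregman h g p x \<le> y \<bullet> (x - x') + bregman h g x' x))"

definition dom_subdiff :: "('a::real_inner \<Rightarrow> real) \<Rightarrow> 'a set \<Rightarrow> 'a set" where
  "dom_subdiff h X = {x \<in> X. \<exists>u. \<forall>x'\<in>X. h x' \<ge> h x + u \<bullet> (x' - x)}"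

end

theory Submission
  imports Defs
begin

(* The prox point p = P_x(y) minimises a differentiable function over the convex set X,
   so it satisfies the variational inequality <grad h(p) - y - grad h(x), x' - p> >= 0 for
   all x' in X.  Adding these inequalities for p1 = P_x1(y) and p2 = P_x2(y), tested at
   x' = p2 and x' = p1, cancels y and gives
     <grad h(p1) - grad h(p2), p1 - p2> <= <grad h(x1) - grad h(x2), p1 - p2>.
   Strong convexity bounds the left side below by K ||p1 - p2||^2, the dual norm and the
   Lipschitz bound bound the right side above by L_h ||x1 - x2|| ||p1 - p2||; divide by
   ||p1 - p2||. *)

lemma is_normD:
  assumes "is_norm N"
  shows is_norm_nonneg: "0 \<le> N x"
    and is_norm_eq_0_iff: "N x = 0 \<longleftrightarrow> x = 0"
    and is_norm_zero: "N 0 = 0"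
    and is_norm_scaleR: "N (c *\<^sub>R x) = \<bar>c\<bar> * N x"
    and is_norm_triangle: "N (x + y) \<le> N x + N y"
  using assms unfolding is_norm_def by auto

lemma is_norm_convex_on:
  assumes "is_norm N"
  shows "convex_on UNIV N"
proof (rule convex_onI)
  fix t :: real and x y assume "0 < t" "t < 1"
  then show "N ((1 - t) *\<^sub>R x + t *\<^sub>R y) \<le> (1 - t) * N x + t * N y"
    using is_norm_triangle[OF assms, of "(1 - t) *\<^sub>R x" "t *\<^sub>R y"] by (simp add: is_norm_scaleR[OF assms])
qed simp

text \<open>A norm is convex, hence continuous, so it attains a positive minimum on the
  compact Euclidean unit sphere.\<close>
lemma is_norm_ge_scaled_norm:
  fixes N :: "'a::euclidean_space \<Rightarrow> real"
  assumes "is_norm N"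
  obtains m where "m > 0" "\<And>x. m * norm x \<le> N x"
proof -
  have "continuous_on (sphere (0::'a) 1) N"
    using convex_on_continuous[OF open_UNIV is_norm_convex_on[OF assms]] continuous_on_subset by blast
  then obtain x0 where x0: "x0 \<in> sphere (0::'a) 1" "\<And>x. x \<in> sphere 0 1 \<Longrightarrow> N x0 \<le> N x"
    using continuous_attains_inf[of "sphere (0::'a) 1" N] by auto
  have "N x0 * norm x \<le> N x" for x
  proof (cases "x = 0")
    case False
    then have "N x0 \<le> N (x /\<^sub>R norm x)" using x0(2) by simp
    then show ?thesis using False by (simp add: is_norm_scaleR[OF assms] field_simps)
  qed (simp add: is_norm_nonneg[OF assms])
  moreover have "N x0 > 0"
    using x0(1) is_norm_nonneg[OF assms] is_norm_eq_0_iff[OF assms] by (metis less_eq_real_def norm_zero one_neq_zero mem_sphere_0)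
  ultimately show thesis using that by blast
qed

lemma bdd_above_dual_norm_set:
  fixes N :: "'a::euclidean_space \<Rightarrow> real"
  assumes "is_norm N"
  shows "bdd_above {y \<bullet> x | x. N x \<le> 1}"
proof -
  obtain m where m: "m > 0" "\<And>x. m * norm x \<le> N x" using is_norm_ge_scaled_norm[OF assms] by blast
  have "y \<bullet> x \<le> norm y / m" if "N x \<le> 1" for x
  proof -
    have "m * norm x \<le> 1" using m(2)[of x] that by linarith
    then have "norm y * (m * norm x) \<le> norm y" by (simp add: mult_left_le)
    moreover have "m * (y \<bullet> x) \<le> m * (norm y * norm x)"
      using norm_cauchy_schwarz[of y x] m(1) by (simp add: mult.commute)
    ultimately have "m * (y \<bullet> x) \<le> norm y" by (simp add: algebra_simps)
    then show ?thesis using m(1) by (simp add: field_simps)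
  qed
  then show ?thesis by (intro bdd_aboveI[where M = "norm y / m"]) blast
qed

lemma dual_norm_nonneg:
  fixes N :: "'a::euclidean_space \<Rightarrow> real"
  assumes "is_norm N"
  shows "0 \<le> dual_norm N y"
proof -
  have "y \<bullet> 0 \<in> {y \<bullet> x | x. N x \<le> 1}" using is_norm_zero[OF assms] by fastforce
  then show ?thesis unfolding dual_norm_def using cSup_upper[OF _ bdd_above_dual_norm_set[OF assms]] by simp
qed

lemma dual_norm_inner_le:
  fixes N :: "'a::euclidean_space \<Rightarrow> real"
  assumes "is_norm N"
  shows "y \<bullet> x \<le> dual_norm N y * N x"
proof (cases "x = 0")
  case False
  then have pos: "N x > 0" using is_norm_nonneg[OF assms] is_norm_eq_0_iff[OF assms] by (metis less_eq_real_def)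
  then have "N (x /\<^sub>R N x) \<le> 1" using is_norm_scaleR[OF assms] by simp
  then have "y \<bullet> (x /\<^sub>R N x) \<le> dual_norm N y"
    unfolding dual_norm_def by (intro cSup_upper bdd_above_dual_norm_set[OF assms]) (rule CollectI, rule exI, rule conjI[OF refl])
  then show ?thesis using pos by (simp add: field_simps)
qed (simp add: is_norm_zero[OF assms])

lemma has_derivative_nonneg_at_min_on_convex:
  fixes f :: "'a::real_normed_vector \<Rightarrow> real"
  assumes deriv: "(f has_derivative f') (at p)"
    and "convex X" "p \<in> X" "x \<in> X"
    and min: "\<And>q. q \<in> X \<Longrightarrow> f p \<le> f q"
  shows "f' (x - p) \<ge> 0"
proof (rule ccontr)
  assume neg: "\<not> f' (x - p) \<ge> 0"
  interpret f': bounded_linear f' using deriv by (rule has_derivative_bounded_linear)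
  define \<phi> where "\<phi> t = f (p + t *\<^sub>R (x - p))" for t :: real
  have "((\<lambda>t::real. p + t *\<^sub>R (x - p)) has_derivative (\<lambda>t. t *\<^sub>R (x - p))) (at 0)"
    by (auto intro!: derivative_eq_intros)
  then have "(\<phi> has_derivative (\<lambda>t. f' (t *\<^sub>R (x - p)))) (at 0)"
    unfolding \<phi>_def by (rule has_derivative_compose) (simp add: deriv)
  then have "(\<phi> has_real_derivative f' (x - p)) (at 0)"
    unfolding has_field_derivative_def by (simp add: f'.scaleR mult_commute_abs)
  then obtain e where e: "e > 0" "\<And>t. 0 < t \<Longrightarrow> t < e \<Longrightarrow> \<phi> t < \<phi> 0"
    using has_real_derivative_neg_dec_right[of \<phi> _ 0 UNIV] neg by force
  define t where "t = min (e / 2) 1"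
  have t: "0 < t" "t < e" "t \<le> 1" using e(1) by (auto simp: t_def)
  have "p + t *\<^sub>R (x - p) = (1 - t) *\<^sub>R p + t *\<^sub>R x" by (simp add: algebra_simps)
  also have "\<dots> \<in> X" using assms(2-4) t by (intro convexD) auto
  finally have "\<phi> 0 \<le> \<phi> t" using min unfolding \<phi>_def by simp
  with e(2)[OF t(1,2)] show False by simp
qed

lemma prox_minimizes:
  fixes h :: "'a::real_inner \<Rightarrow> real"
  assumes "compact X" "x \<in> X" "continuous_on X h"
  shows prox_mem: "prox h g X x y \<in> X"
    and prox_le: "x' \<in> X \<Longrightarrow> y \<bullet> (x - prox h g X x y) + bregman h g (prox h g X x y) x
                              \<le> y \<bullet> (x - x') + bregman h g x' x"
proof -
  define F where "F q = y \<bullet> (x - q) + bregman h g q x" for q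
  have "continuous_on X F"
    unfolding F_def bregman_def using assms(3) by (intro continuous_intros)
  then obtain p where "p \<in> X \<and> (\<forall>q\<in>X. F p \<le> F q)"
    using continuous_attains_inf[OF assms(1)] assms(2) by blast
  then have "prox h g X x y \<in> X \<and> (\<forall>q\<in>X. F (prox h g X x y) \<le> F q)"
    unfolding prox_def F_def by (rule someI)
  then show "prox h g X x y \<in> X" "x' \<in> X \<Longrightarrow> F (prox h g X x y) \<le> F x'"
    by auto
qed

lemma prox_variational_inequality:
  fixes h :: "'a::real_inner \<Rightarrow> real"
  assumes "compact X" "convex X" "x \<in> X" "x' \<in> X"
    and deriv: "\<And>q. q \<in> X \<Longrightarrow> (h has_derivative (\<lambda>v. g q \<bullet> v)) (at q)"
  shows "(g (prox h g X x y) - (y + g x)) \<bullet> (x' - prox h g X x y) \<ge> 0"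
proof -
  define p where "p = prox h g X x y"
  have "continuous_on X h"
    by (rule has_derivative_continuous_on[OF has_derivative_at_withinI[OF deriv]])
  then have p: "p \<in> X" "\<And>q. q \<in> X \<Longrightarrow> y \<bullet> (x - p) + bregman h g p x \<le> y \<bullet> (x - q) + bregman h g q x"
    unfolding p_def using prox_minimizes[OF assms(1,3)] by auto
  have "((\<lambda>q. y \<bullet> (x - q) + bregman h g q x) has_derivative (\<lambda>v. (g p - (y + g x)) \<bullet> v)) (at p)"
    unfolding bregman_def using deriv[OF p(1)]
    by (auto intro!: derivative_eq_intros simp: algebra_simps inner_diff_left inner_add_left)
  from has_derivative_nonneg_at_min_on_convex[OF this assms(2) p(1) assms(4) p(2)]
  show ?thesis unfolding p_def .
qed

lemma inner_prox_diff_le: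
  fixes h :: "'a::real_inner \<Rightarrow> real"
    and y :: 'a
  assumes "compact X" "convex X" "x\<^sub>1 \<in> X" "x\<^sub>2 \<in> X"
    and deriv: "\<And>q. q \<in> X \<Longrightarrow> (h has_derivative (\<lambda>v. g q \<bullet> v)) (at q)"
  defines "p\<^sub>1 \<equiv> prox h g X x\<^sub>1 y" and "p\<^sub>2 \<equiv> prox h g X x\<^sub>2 y"
  shows "(g p\<^sub>1 - g p\<^sub>2) \<bullet> (p\<^sub>1 - p\<^sub>2) \<le> (g x\<^sub>1 - g x\<^sub>2) \<bullet> (p\<^sub>1 - p\<^sub>2)"
proof -
  have "continuous_on X h"
    by (rule has_derivative_continuous_on[OF has_derivative_at_withinI[OF deriv]])
  then have "p\<^sub>1 \<in> X" "p\<^sub>2 \<in> X"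
    unfolding p\<^sub>1_def p\<^sub>2_def using prox_mem assms(1,3,4) by blast+
  then have "(g p\<^sub>1 - (y + g x\<^sub>1)) \<bullet> (p\<^sub>2 - p\<^sub>1) \<ge> 0" "(g p\<^sub>2 - (y + g x\<^sub>2)) \<bullet> (p\<^sub>1 - p\<^sub>2) \<ge> 0"
    unfolding p\<^sub>1_def p\<^sub>2_def using prox_variational_inequality[OF assms(1,2) _ _ deriv] assms(3,4) by blast+
  then show ?thesis
    by (simp add: inner_diff_left inner_diff_right inner_add_left inner_add_right inner_commute)
qed

lemma le_divide_if_mult_square_le:
  fixes K b t :: real
  assumes "0 < K" "0 \<le> b" "K * t\<^sup>2 \<le> b * t"
  shows "t \<le> b / K"
proof (cases "t > 0")
  case True
  then have "K * t \<le> b" using assms(3) by (simp add: power2_eq_square)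
  then show ?thesis using assms(1) by (simp add: field_simps)
next
  case False
  moreover have "0 \<le> b / K" using assms(1,2) by simp
  ultimately show ?thesis by linarith
qed

theorem lemma2:
  fixes N :: "'a::euclidean_space \<Rightarrow> real"
    and h :: "'a \<Rightarrow> real" and g :: "'a \<Rightarrow> 'a"
    and X U :: "'a set" and K L\<^sub>h :: real
  assumes "is_norm N"
    and "compact X" and "convex X"
    and "open U" and "X \<subseteq> U"
    and "\<And>x. x \<in> U \<Longrightarrow> (h has_derivative (\<lambda>v. g x \<bullet> v)) (at x)"
    and "K > 0"
    and "\<And>x x'. x \<in> X \<Longrightarrow> x' \<in> X \<Longrightarrow> (g x - g x') \<bullet> (x - x') \<ge> K * (N (x - x'))\<^sup>2"
    and "\<And>x x'. x \<in> X \<Longrightarrow> x' \<in> X \<Longrightarrow> dual_norm N (g x - g x') \<le> L\<^sub>h * N (x - x')"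
  shows "\<forall>y x\<^sub>1 x\<^sub>2. x\<^sub>1 \<in> dom_subdiff h X \<longrightarrow> x\<^sub>2 \<in> dom_subdiff h X \<longrightarrow>
           N (prox h g X x\<^sub>1 y - prox h g X x\<^sub>2 y) \<le> L\<^sub>h / K * N (x\<^sub>1 - x\<^sub>2)"
proof (intro allI impI)
  fix y x\<^sub>1 x\<^sub>2 assume "x\<^sub>1 \<in> dom_subdiff h X" "x\<^sub>2 \<in> dom_subdiff h X"
  then have x: "x\<^sub>1 \<in> X" "x\<^sub>2 \<in> X" unfolding dom_subdiff_def by auto
  have deriv: "\<And>q. q \<in> X \<Longrightarrow> (h has_derivative (\<lambda>v. g q \<bullet> v)) (at q)"
    using assms(5,6) by blast
  have "continuous_on X h"
    by (rule has_derivative_continuous_on[OF has_derivative_at_withinI[OF deriv]])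
  define p\<^sub>1 p\<^sub>2 where "p\<^sub>1 = prox h g X x\<^sub>1 y" and "p\<^sub>2 = prox h g X x\<^sub>2 y"
  have p: "p\<^sub>1 \<in> X" "p\<^sub>2 \<in> X"
    unfolding p\<^sub>1_def p\<^sub>2_def using prox_mem assms(2) x \<open>continuous_on X h\<close> by blast+
  have "K * (N (p\<^sub>1 - p\<^sub>2))\<^sup>2 \<le> (g p\<^sub>1 - g p\<^sub>2) \<bullet> (p\<^sub>1 - p\<^sub>2)"
    using assms(8)[OF p] .
  also have "\<dots> \<le> (g x\<^sub>1 - g x\<^sub>2) \<bullet> (p\<^sub>1 - p\<^sub>2)"
    unfolding p\<^sub>1_def p\<^sub>2_def using inner_prox_diff_le[OF assms(2,3) x deriv] .
  also have "\<dots> \<le> dual_norm N (g x\<^sub>1 - g x\<^sub>2) * N (p\<^sub>1 - p\<^sub>2)"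
    using dual_norm_inner_le[OF assms(1)] .
  also have "\<dots> \<le> L\<^sub>h * N (x\<^sub>1 - x\<^sub>2) * N (p\<^sub>1 - p\<^sub>2)"
    using assms(9)[OF x] is_norm_nonneg[OF assms(1)] by (rule mult_right_mono)
  finally have "K * (N (p\<^sub>1 - p\<^sub>2))\<^sup>2 \<le> L\<^sub>h * N (x\<^sub>1 - x\<^sub>2) * N (p\<^sub>1 - p\<^sub>2)" .
  moreover have "0 \<le> L\<^sub>h * N (x\<^sub>1 - x\<^sub>2)"
    using assms(9)[OF x] dual_norm_nonneg[OF assms(1)] order_trans by blast
  ultimately show "N (p\<^sub>1 - p\<^sub>2) \<le> L\<^sub>h / K * N (x\<^sub>1 - x\<^sub>2)"
    using le_divide_if_mult_square_le[OF assms(7)] by simp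
qed

end
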